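(* Let $X$ be a matrix ordered operator space and let $J\subseteq X$ be a kernel. Then $X/J$, with the quotient operator space structure, involution $(x+J)^*=x^*+J$ and cones $M_n(X/J)^+=\overline{\{x+M_n(J):x\in M_n(X)^+\}}$, is a matrix ordered operator space.
   Context: A matrix ordered operator space is an operator space $X$ with a conjugate-linear completely isometric involution and, for each $n$, a norm-closed cone $M_n(X)^+\subseteq M_n(X)^{sa}$ such that the family is closed under $x\mapsto\alpha^*x\alpha$ for scalar matrices $\alpha$ and under direct sums (a matrix convex cone), and $M_n(X)^+\cap(-M_n(X)^+)=\{0\}$ for all $n$. A closed subspace $J\subseteq X$ is a kernel if $J=\ker\phi$ for some completely contractive completely positive map $\phi:X\to Y$ into a matrix ordered operator space $Y$. The quotient operator space structure identifies $M_n(X/J)$ isometrically with $M_n(X)/M_n(J)$, and the closure in the claim is in this quotient norm. *)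

theory Defs
  imports Complex_Main
begin

text \<open>An n x n matrix over V is a function nat => nat => 'v whose entries with indices < n lie in
  the carrier and which is zero outside the n x n block.\<close>

record 'v mos =
  vcar   :: "'v set"
  vadd   :: "'v \<Rightarrow> 'v \<Rightarrow> 'v"
  vzero  :: "'v"
  vscale :: "complex \<Rightarrow> 'v \<Rightarrow> 'v"
  vstar  :: "'v \<Rightarrow> 'v"
  mnorm  :: "nat \<Rightarrow> (nat \<Rightarrow> nat \<Rightarrow> 'v) \<Rightarrow> real"
  mpos   :: "nat \<Rightarrow> (nat \<Rightarrow> nat \<Rightarrow> 'v) set"

definition cvector_space :: "('v, 'z) mos_scheme \<Rightarrow> bool" where
  "cvector_space V \<longleftrightarrow>
     vzero V \<in> vcar V \<and>
     (\<forall>a\<in>vcar V. \<forall>b\<in>vcar V. vadd V a b \<in> vcar V) \<and>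
     (\<forall>c. \<forall>a\<in>vcar V. vscale V c a \<in> vcar V) \<and>
     (\<forall>a\<in>vcar V. \<forall>b\<in>vcar V. \<forall>c\<in>vcar V. vadd V (vadd V a b) c = vadd V a (vadd V b c)) \<and>
     (\<forall>a\<in>vcar V. \<forall>b\<in>vcar V. vadd V a b = vadd V b a) \<and>
     (\<forall>a\<in>vcar V. vadd V a (vzero V) = a) \<and>
     (\<forall>a\<in>vcar V. vadd V a (vscale V (-1) a) = vzero V) \<and>
     (\<forall>a\<in>vcar V. vscale V 1 a = a) \<and>
     (\<forall>c d. \<forall>a\<in>vcar V. vscale V c (vscale V d a) = vscale V (c * d) a) \<and>
     (\<forall>c d. \<forall>a\<in>vcar V. vscale V (c + d) a = vadd V (vscale V c a) (vscale V d a)) \<and>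
     (\<forall>c. \<forall>a\<in>vcar V. \<forall>b\<in>vcar V. vscale V c (vadd V a b) = vadd V (vscale V c a) (vscale V c b))"

primrec vsum :: "('v, 'z) mos_scheme \<Rightarrow> (nat \<Rightarrow> 'v) \<Rightarrow> nat \<Rightarrow> 'v" where
  "vsum V f 0 = vzero V"
| "vsum V f (Suc k) = vadd V (vsum V f k) (f k)"

definition mat_carrier :: "('v, 'z) mos_scheme \<Rightarrow> nat \<Rightarrow> (nat \<Rightarrow> nat \<Rightarrow> 'v) set" where
  "mat_carrier V n = {x. (\<forall>i<n. \<forall>j<n. x i j \<in> vcar V) \<and>
                          (\<forall>i j. (n \<le> i \<or> n \<le> j) \<longrightarrow> x i j = vzero V)}"

definition mat_zero :: "('v, 'z) mos_scheme \<Rightarrow> nat \<Rightarrow> nat \<Rightarrow> 'v" where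
  "mat_zero V = (\<lambda>i j. vzero V)"

definition mat_add :: "('v, 'z) mos_scheme \<Rightarrow> nat \<Rightarrow> (nat \<Rightarrow> nat \<Rightarrow> 'v) \<Rightarrow> (nat \<Rightarrow> nat \<Rightarrow> 'v) \<Rightarrow> nat \<Rightarrow> nat \<Rightarrow> 'v" where
  "mat_add V n x y = (\<lambda>i j. if i < n \<and> j < n then vadd V (x i j) (y i j) else vzero V)"

definition mat_scale :: "('v, 'z) mos_scheme \<Rightarrow> nat \<Rightarrow> complex \<Rightarrow> (nat \<Rightarrow> nat \<Rightarrow> 'v) \<Rightarrow> nat \<Rightarrow> nat \<Rightarrow> 'v" where
  "mat_scale V n c x = (\<lambda>i j. if i < n \<and> j < n then vscale V c (x i j) else vzero V)"

definition mat_sub :: "('v, 'z) mos_scheme \<Rightarrow> nat \<Rightarrow> (nat \<Rightarrow> nat \<Rightarrow> 'v) \<Rightarrow> (nat \<Rightarrow> nat \<Rightarrow> 'v) \<Rightarrow> nat \<Rightarrow> nat \<Rightarrow> 'v" where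
  "mat_sub V n x y = mat_add V n x (mat_scale V n (-1) y)"

definition mat_star :: "('v, 'z) mos_scheme \<Rightarrow> nat \<Rightarrow> (nat \<Rightarrow> nat \<Rightarrow> 'v) \<Rightarrow> nat \<Rightarrow> nat \<Rightarrow> 'v" where
  "mat_star V n x = (\<lambda>i j. if i < n \<and> j < n then vstar V (x j i) else vzero V)"

definition mat_lr :: "('v, 'z) mos_scheme \<Rightarrow> nat \<Rightarrow> nat \<Rightarrow> (nat \<Rightarrow> nat \<Rightarrow> complex)
      \<Rightarrow> (nat \<Rightarrow> nat \<Rightarrow> 'v) \<Rightarrow> (nat \<Rightarrow> nat \<Rightarrow> complex) \<Rightarrow> nat \<Rightarrow> nat \<Rightarrow> 'v" where
  "mat_lr V n m \<alpha> x \<beta> = (\<lambda>k l. if k < m \<and> l < m then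
       vsum V (\<lambda>i. vsum V (\<lambda>j. vscale V (\<alpha> k i * \<beta> j l) (x i j)) n) n else vzero V)"

definition mat_conj :: "('v, 'z) mos_scheme \<Rightarrow> nat \<Rightarrow> nat \<Rightarrow> (nat \<Rightarrow> nat \<Rightarrow> complex)
      \<Rightarrow> (nat \<Rightarrow> nat \<Rightarrow> 'v) \<Rightarrow> nat \<Rightarrow> nat \<Rightarrow> 'v" where
  "mat_conj V n m \<alpha> x = mat_lr V n m (\<lambda>k i. cnj (\<alpha> i k)) x \<alpha>"

definition mat_dsum :: "('v, 'z) mos_scheme \<Rightarrow> nat \<Rightarrow> nat \<Rightarrow> (nat \<Rightarrow> nat \<Rightarrow> 'v)
      \<Rightarrow> (nat \<Rightarrow> nat \<Rightarrow> 'v) \<Rightarrow> nat \<Rightarrow> nat \<Rightarrow> 'v" where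
  "mat_dsum V n m x y = (\<lambda>i j. if i < n \<and> j < n then x i j
       else if n \<le> i \<and> i < n + m \<and> n \<le> j \<and> j < n + m then y (i - n) (j - n) else vzero V)"

definition cmat_norm :: "nat \<Rightarrow> nat \<Rightarrow> (nat \<Rightarrow> nat \<Rightarrow> complex) \<Rightarrow> real" where
  "cmat_norm m n \<alpha> = Sup {sqrt (\<Sum>i<m. (cmod (\<Sum>j<n. \<alpha> i j * v j))\<^sup>2) | v.
                              (\<Sum>j<n. (cmod (v j))\<^sup>2) \<le> 1}"

definition operator_space :: "('v, 'z) mos_scheme \<Rightarrow> bool" where
  "operator_space V \<longleftrightarrow> cvector_space V \<and>
     (\<forall>n\<ge>1. \<forall>x\<in>mat_carrier V n. mnorm V n x \<ge> 0) \<and>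
     (\<forall>n\<ge>1. \<forall>x\<in>mat_carrier V n. mnorm V n x = 0 \<longrightarrow> x = mat_zero V) \<and>
     (\<forall>n\<ge>1. \<forall>c. \<forall>x\<in>mat_carrier V n. mnorm V n (mat_scale V n c x) = cmod c * mnorm V n x) \<and>
     (\<forall>n\<ge>1. \<forall>x\<in>mat_carrier V n. \<forall>y\<in>mat_carrier V n.
         mnorm V n (mat_add V n x y) \<le> mnorm V n x + mnorm V n y) \<and>
     (\<forall>n\<ge>1. \<forall>m\<ge>1. \<forall>x\<in>mat_carrier V n. \<forall>y\<in>mat_carrier V m.
         mnorm V (n + m) (mat_dsum V n m x y) = max (mnorm V n x) (mnorm V m y)) \<and>
     (\<forall>n\<ge>1. \<forall>m\<ge>1. \<forall>x\<in>mat_carrier V n. \<forall>\<alpha> \<beta>.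
         mnorm V m (mat_lr V n m \<alpha> x \<beta>) \<le> cmat_norm m n \<alpha> * mnorm V n x * cmat_norm n m \<beta>)"

definition involutive_os :: "('v, 'z) mos_scheme \<Rightarrow> bool" where
  "involutive_os V \<longleftrightarrow> operator_space V \<and>
     (\<forall>a\<in>vcar V. vstar V a \<in> vcar V) \<and>
     (\<forall>a\<in>vcar V. vstar V (vstar V a) = a) \<and>
     (\<forall>a\<in>vcar V. \<forall>b\<in>vcar V. vstar V (vadd V a b) = vadd V (vstar V a) (vstar V b)) \<and>
     (\<forall>c. \<forall>a\<in>vcar V. vstar V (vscale V c a) = vscale V (cnj c) (vstar V a)) \<and>
     (\<forall>n\<ge>1. \<forall>x\<in>mat_carrier V n. mnorm V n (mat_star V n x) = mnorm V n x)"

definition mat_closure :: "('v, 'z) mos_scheme \<Rightarrow> nat \<Rightarrow> (nat \<Rightarrow> nat \<Rightarrow> 'v) set \<Rightarrow> (nat \<Rightarrow> nat \<Rightarrow> 'v) set" where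
  "mat_closure V n S = {x \<in> mat_carrier V n. \<forall>\<epsilon>>0. \<exists>y\<in>S. mnorm V n (mat_sub V n x y) < \<epsilon>}"

definition matrix_ordered_os :: "('v, 'z) mos_scheme \<Rightarrow> bool" where
  "matrix_ordered_os V \<longleftrightarrow> involutive_os V \<and>
     \<comment> \<open>cones consist of self-adjoint matrices\<close>
     (\<forall>n\<ge>1. \<forall>x\<in>mpos V n. x \<in> mat_carrier V n \<and> mat_star V n x = x) \<and>
     \<comment> \<open>norm-closed\<close>
     (\<forall>n\<ge>1. mat_closure V n (mpos V n) \<subseteq> mpos V n) \<and>
     \<comment> \<open>cones\<close>
     (\<forall>n\<ge>1. \<forall>x\<in>mpos V n. \<forall>y\<in>mpos V n. mat_add V n x y \<in> mpos V n) \<and>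
     (\<forall>n\<ge>1. \<forall>t::real. t \<ge> 0 \<longrightarrow> (\<forall>x\<in>mpos V n. mat_scale V n (complex_of_real t) x \<in> mpos V n)) \<and>
     \<comment> \<open>matrix convexity: x \<mapsto> alpha^* x alpha for scalar n x m alpha, and direct sums\<close>
     (\<forall>n\<ge>1. \<forall>m\<ge>1. \<forall>x\<in>mpos V n. \<forall>\<alpha>. mat_conj V n m \<alpha> x \<in> mpos V m) \<and>
     (\<forall>n\<ge>1. \<forall>m\<ge>1. \<forall>x\<in>mpos V n. \<forall>y\<in>mpos V m. mat_dsum V n m x y \<in> mpos V (n + m)) \<and>
     \<comment> \<open>proper: M_n(V)^+ \<inter> -M_n(V)^+ = {0}\<close>
     (\<forall>n\<ge>1. \<forall>x\<in>mpos V n. mat_scale V n (-1) x \<in> mpos V n \<longrightarrow> x = mat_zero V)"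

definition mat_map :: "('w, 'y) mos_scheme \<Rightarrow> nat \<Rightarrow> ('v \<Rightarrow> 'w) \<Rightarrow> (nat \<Rightarrow> nat \<Rightarrow> 'v) \<Rightarrow> nat \<Rightarrow> nat \<Rightarrow> 'w" where
  "mat_map W n \<phi> x = (\<lambda>i j. if i < n \<and> j < n then \<phi> (x i j) else vzero W)"

definition ccp_map :: "('v, 'z) mos_scheme \<Rightarrow> ('w, 'y) mos_scheme \<Rightarrow> ('v \<Rightarrow> 'w) \<Rightarrow> bool" where
  "ccp_map V W \<phi> \<longleftrightarrow>
     (\<forall>a\<in>vcar V. \<phi> a \<in> vcar W) \<and>
     (\<forall>a\<in>vcar V. \<forall>b\<in>vcar V. \<phi> (vadd V a b) = vadd W (\<phi> a) (\<phi> b)) \<and>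
     (\<forall>c. \<forall>a\<in>vcar V. \<phi> (vscale V c a) = vscale W c (\<phi> a)) \<and>
     (\<forall>a\<in>vcar V. \<phi> (vstar V a) = vstar W (\<phi> a)) \<and>
     (\<forall>n\<ge>1. \<forall>x\<in>mat_carrier V n. mnorm W n (mat_map W n \<phi> x) \<le> mnorm V n x) \<and>
     (\<forall>n\<ge>1. \<forall>x\<in>mpos V n. mat_map W n \<phi> x \<in> mpos W n)"

definition kernel_of :: "('v, 'z) mos_scheme \<Rightarrow> ('w, 'y) mos_scheme \<Rightarrow> ('v \<Rightarrow> 'w) \<Rightarrow> 'v set" where
  "kernel_of V W \<phi> = {a \<in> vcar V. \<phi> a = vzero W}"

definition coset :: "('v, 'z) mos_scheme \<Rightarrow> 'v set \<Rightarrow> 'v \<Rightarrow> 'v set" where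
  "coset X J x = {vadd X x j | j. j \<in> J}"

text \<open>Quotient space with involution (x+J)^* = x^* + J and quotient matrix norms
  ||[x_ij + J]||_n = inf { ||y||_n : y in M_n(X), y_ij in x_ij + J }, i.e. the norm of
  M_n(X)/M_n(J).  No cones yet.\<close>
definition quot_base :: "('v, 'z) mos_scheme \<Rightarrow> 'v set \<Rightarrow> 'v set mos" where
  "quot_base X J = \<lparr>
     vcar = {coset X J x | x. x \<in> vcar X},
     vadd = (\<lambda>A B. {vadd X a b | a b. a \<in> A \<and> b \<in> B}),
     vzero = J,
     vscale = (\<lambda>c A. {vadd X (vscale X c a) j | a j. a \<in> A \<and> j \<in> J}),
     vstar = (\<lambda>A. {vadd X (vstar X a) j | a j. a \<in> A \<and> j \<in> J}),
     mnorm = (\<lambda>n Q. Inf {mnorm X n y | y. y \<in> mat_carrier X n \<and> (\<forall>i<n. \<forall>j<n. y i j \<in> Q i j)}),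
     mpos = (\<lambda>n. {}) \<rparr>"

definition quot :: "('v, 'z) mos_scheme \<Rightarrow> 'v set \<Rightarrow> 'v set mos" where
  "quot X J = (quot_base X J)\<lparr> mpos := (\<lambda>n.
       mat_closure (quot_base X J) n {(\<lambda>i j. coset X J (x i j)) | x. x \<in> mpos X n}) \<rparr>"

end

theory Submission
  imports Defs
begin

(* Because J is the kernel of the completely contractive map phi, the maps M_n(X/J) -> M_n(Y)
   induced by phi are well defined, injective and contractive for the quotient norm.
   Ruan's axioms pass from M_n(X) to the quotient norm because every matrix operation lifts to
   representatives; for direct sums the lower bound comes from compressing a lift of x (+) y to
   its two diagonal blocks, which are lifts of x and y.  The quotient cones are closed and matrix
   convex because every cone operation preserves M_n(X)^+ and is Lipschitz for the quotient norm.
   Finally, every positive quotient matrix is mapped into the closed cone M_n(Y)^+, which consists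
   of self-adjoint matrices and is proper; injectivity of the induced map transfers both
   properties back to M_n(X/J). *)

section \<open>Matrices over a complex vector space\<close>

lemma vsum_cong [cong]:
  "k = k' \<Longrightarrow> (\<And>i. i < k' =simp=> f i = g i) \<Longrightarrow> vsum V f k = vsum V g k'"
  unfolding simp_implies_def by (induction k arbitrary: k') auto

locale cvs =
  fixes V :: "('v, 'z) mos_scheme"
  assumes cvector_space: "cvector_space V"
begin

lemma zero_in [simp]: "vzero V \<in> vcar V"
  using cvector_space unfolding cvector_space_def by auto
lemma add_in [simp]: "a \<in> vcar V \<Longrightarrow> b \<in> vcar V \<Longrightarrow> vadd V a b \<in> vcar V"
  using cvector_space unfolding cvector_space_def by auto
lemma scale_in [simp]: "a \<in> vcar V \<Longrightarrow> vscale V c a \<in> vcar V"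
  using cvector_space unfolding cvector_space_def by auto
lemma add_assoc:
  "a \<in> vcar V \<Longrightarrow> b \<in> vcar V \<Longrightarrow> c \<in> vcar V \<Longrightarrow> vadd V (vadd V a b) c = vadd V a (vadd V b c)"
  using cvector_space unfolding cvector_space_def by auto
lemma add_commute: "a \<in> vcar V \<Longrightarrow> b \<in> vcar V \<Longrightarrow> vadd V a b = vadd V b a"
  using cvector_space unfolding cvector_space_def by auto
lemma add_zero [simp]: "a \<in> vcar V \<Longrightarrow> vadd V a (vzero V) = a"
  using cvector_space unfolding cvector_space_def by auto
lemma add_neg: "a \<in> vcar V \<Longrightarrow> vadd V a (vscale V (-1) a) = vzero V"
  using cvector_space unfolding cvector_space_def by auto
lemma scale_one [simp]: "a \<in> vcar V \<Longrightarrow> vscale V 1 a = a"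
  using cvector_space unfolding cvector_space_def by auto
lemma scale_scale [simp]: "a \<in> vcar V \<Longrightarrow> vscale V c (vscale V d a) = vscale V (c * d) a"
  using cvector_space unfolding cvector_space_def by auto
lemma scale_left_distrib:
  "a \<in> vcar V \<Longrightarrow> vscale V (c + d) a = vadd V (vscale V c a) (vscale V d a)"
  using cvector_space unfolding cvector_space_def by auto
lemma scale_right_distrib:
  "a \<in> vcar V \<Longrightarrow> b \<in> vcar V \<Longrightarrow> vscale V c (vadd V a b) = vadd V (vscale V c a) (vscale V c b)"
  using cvector_space unfolding cvector_space_def by auto

lemma zero_add [simp]: "a \<in> vcar V \<Longrightarrow> vadd V (vzero V) a = a"
  using add_commute add_zero zero_in by metis
lemma add_left_commute:
  "a \<in> vcar V \<Longrightarrow> b \<in> vcar V \<Longrightarrow> c \<in> vcar V \<Longrightarrow> vadd V a (vadd V b c) = vadd V b (vadd V a c)"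
  by (metis add_assoc add_commute)
lemmas add_ac = add_assoc add_commute add_left_commute

lemma neg_add: "a \<in> vcar V \<Longrightarrow> vadd V (vscale V (-1) a) a = vzero V"
  using add_commute add_neg scale_in by metis
lemma add_neg_cancel_left: "a \<in> vcar V \<Longrightarrow> b \<in> vcar V \<Longrightarrow> vadd V a (vadd V (vscale V (-1) a) b) = b"
  by (metis add_assoc add_neg scale_in zero_add)
lemma neg_add_cancel_left: "a \<in> vcar V \<Longrightarrow> b \<in> vcar V \<Longrightarrow> vadd V (vscale V (-1) a) (vadd V a b) = b"
  by (metis add_assoc neg_add scale_in zero_add)
lemma add_left_cancel:
  "a \<in> vcar V \<Longrightarrow> b \<in> vcar V \<Longrightarrow> c \<in> vcar V \<Longrightarrow> vadd V a b = vadd V a c \<Longrightarrow> b = c"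
  by (metis neg_add_cancel_left)
lemma scale_zero_left [simp]: "a \<in> vcar V \<Longrightarrow> vscale V 0 a = vzero V"
  using scale_left_distrib[of a 0 0] add_left_cancel by (metis add_zero add_0 scale_in zero_in)
lemma scale_zero_right [simp]: "vscale V c (vzero V) = vzero V"
  using scale_right_distrib[of "vzero V" "vzero V" c] add_left_cancel by (metis add_zero scale_in zero_in)

lemma vsum_in [simp]: "(\<And>i. i < k \<Longrightarrow> f i \<in> vcar V) \<Longrightarrow> vsum V f k \<in> vcar V"
  by (induction k) auto
lemma vsum_add:
  "(\<And>i. i < k \<Longrightarrow> f i \<in> vcar V) \<Longrightarrow> (\<And>i. i < k \<Longrightarrow> g i \<in> vcar V) \<Longrightarrow>
   vsum V (\<lambda>i. vadd V (f i) (g i)) k = vadd V (vsum V f k) (vsum V g k)"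
  by (induction k) (simp_all add: add_ac)
lemma vsum_scale:
  "(\<And>i. i < k \<Longrightarrow> f i \<in> vcar V) \<Longrightarrow> vsum V (\<lambda>i. vscale V c (f i)) k = vscale V c (vsum V f k)"
  by (induction k) (auto simp: scale_right_distrib)
lemma vsum_zero: "(\<And>i. i < k \<Longrightarrow> f i = vzero V) \<Longrightarrow> vsum V f k = vzero V"
  by (induction k) auto
lemma vsum_delta:
  assumes "k0 < k" "f k0 \<in> vcar V" "\<And>i. i < k \<Longrightarrow> i \<noteq> k0 \<Longrightarrow> f i = vzero V"
  shows "vsum V f k = f k0"
  using assms
proof (induction k)
  case (Suc k)
  show ?case
  proof (cases "k0 = k")
    case True
    then show ?thesis using Suc.prems vsum_zero[of k f] by simp
  qed (use Suc in simp)
qed simp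

abbreviation car where "car n \<equiv> mat_carrier V n"

lemma mat_in [simp]: "x \<in> car n \<Longrightarrow> i < n \<Longrightarrow> j < n \<Longrightarrow> x i j \<in> vcar V"
  unfolding mat_carrier_def by auto
lemma mat_outside: "x \<in> car n \<Longrightarrow> \<not> (i < n \<and> j < n) \<Longrightarrow> x i j = vzero V"
  unfolding mat_carrier_def by auto
lemma mat_carrierI:
  "(\<And>i j. i < n \<Longrightarrow> j < n \<Longrightarrow> x i j \<in> vcar V) \<Longrightarrow> (\<And>i j. \<not> (i < n \<and> j < n) \<Longrightarrow> x i j = vzero V)
   \<Longrightarrow> x \<in> car n"
  unfolding mat_carrier_def by auto

lemma mat_add_in [simp]: "x \<in> car n \<Longrightarrow> y \<in> car n \<Longrightarrow> mat_add V n x y \<in> car n"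
  by (rule mat_carrierI) (auto simp: mat_add_def)
lemma mat_scale_in [simp]: "x \<in> car n \<Longrightarrow> mat_scale V n c x \<in> car n"
  by (rule mat_carrierI) (auto simp: mat_scale_def)
lemma mat_sub_in [simp]: "x \<in> car n \<Longrightarrow> y \<in> car n \<Longrightarrow> mat_sub V n x y \<in> car n"
  by (simp add: mat_sub_def)
lemma mat_zero_in [simp]: "mat_zero V \<in> car n"
  by (rule mat_carrierI) (auto simp: mat_zero_def)
lemma mat_dsum_in [simp]: "x \<in> car n \<Longrightarrow> y \<in> car m \<Longrightarrow> mat_dsum V n m x y \<in> car (n + m)"
  by (rule mat_carrierI) (auto simp: mat_dsum_def)
lemma mat_lr_in [simp]: "x \<in> car n \<Longrightarrow> mat_lr V n m \<alpha> x \<beta> \<in> car m"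
  by (rule mat_carrierI) (auto simp: mat_lr_def)
lemma mat_conj_in [simp]: "x \<in> car n \<Longrightarrow> mat_conj V n m \<alpha> x \<in> car m"
  by (simp add: mat_conj_def)

lemma mat_sub_telescope:
  "x \<in> car n \<Longrightarrow> y \<in> car n \<Longrightarrow> z \<in> car n \<Longrightarrow>
   mat_sub V n x z = mat_add V n (mat_sub V n x y) (mat_sub V n y z)"
  by (intro ext) (auto simp: mat_sub_def mat_add_def mat_scale_def add_assoc neg_add_cancel_left)
lemma mat_sub_add_add:
  "x \<in> car n \<Longrightarrow> y \<in> car n \<Longrightarrow> p \<in> car n \<Longrightarrow> q \<in> car n \<Longrightarrow>
   mat_sub V n (mat_add V n x y) (mat_add V n p q) = mat_add V n (mat_sub V n x p) (mat_sub V n y q)"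
  by (intro ext) (auto simp: mat_sub_def mat_add_def mat_scale_def scale_right_distrib add_ac)
lemma mat_sub_scale_scale:
  "x \<in> car n \<Longrightarrow> p \<in> car n \<Longrightarrow>
   mat_sub V n (mat_scale V n c x) (mat_scale V n c p) = mat_scale V n c (mat_sub V n x p)"
  by (intro ext) (auto simp: mat_sub_def mat_add_def mat_scale_def scale_right_distrib mult.commute)
lemma mat_sub_dsum_dsum:
  "x \<in> car n \<Longrightarrow> p \<in> car n \<Longrightarrow> y \<in> car m \<Longrightarrow> q \<in> car m \<Longrightarrow>
   mat_sub V (n + m) (mat_dsum V n m x y) (mat_dsum V n m p q) =
   mat_dsum V n m (mat_sub V n x p) (mat_sub V m y q)"
  by (intro ext) (auto simp: mat_sub_def mat_add_def mat_scale_def mat_dsum_def)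
lemma mat_scale_inverse: "x \<in> car n \<Longrightarrow> c \<noteq> 0 \<Longrightarrow> mat_scale V n (1 / c) (mat_scale V n c x) = x"
  by (intro ext) (auto simp: mat_scale_def mat_outside)

lemma mat_lr_add:
  "x \<in> car n \<Longrightarrow> y \<in> car n \<Longrightarrow>
   mat_lr V n m \<alpha> (mat_add V n x y) \<beta> = mat_add V m (mat_lr V n m \<alpha> x \<beta>) (mat_lr V n m \<alpha> y \<beta>)"
  by (intro ext) (simp add: mat_lr_def mat_add_def scale_right_distrib vsum_add)
lemma mat_lr_scale:
  "x \<in> car n \<Longrightarrow> mat_lr V n m \<alpha> (mat_scale V n d x) \<beta> = mat_scale V m d (mat_lr V n m \<alpha> x \<beta>)"
  by (intro ext) (simp add: mat_lr_def mat_scale_def mult.commute flip: vsum_scale)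
lemma mat_lr_sub:
  "x \<in> car n \<Longrightarrow> y \<in> car n \<Longrightarrow>
   mat_lr V n m \<alpha> (mat_sub V n x y) \<beta> = mat_sub V m (mat_lr V n m \<alpha> x \<beta>) (mat_lr V n m \<alpha> y \<beta>)"
  by (simp add: mat_sub_def mat_lr_add mat_lr_scale)
lemma mat_conj_sub:
  "x \<in> car n \<Longrightarrow> y \<in> car n \<Longrightarrow>
   mat_conj V n m \<alpha> (mat_sub V n x y) = mat_sub V m (mat_conj V n m \<alpha> x) (mat_conj V n m \<alpha> y)"
  by (simp add: mat_conj_def mat_lr_sub)

end

section \<open>Diagonal blocks\<close>

definition block_sel :: "nat \<Rightarrow> nat \<Rightarrow> nat \<Rightarrow> complex" where
  "block_sel s k i = (if i = k + s then 1 else 0)"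

definition mat_block :: "('v, 'z) mos_scheme \<Rightarrow> nat \<Rightarrow> nat \<Rightarrow> nat \<Rightarrow> (nat \<Rightarrow> nat \<Rightarrow> 'v) \<Rightarrow> nat \<Rightarrow> nat \<Rightarrow> 'v" where
  "mat_block V N p s z = mat_lr V N p (block_sel s) z (\<lambda>j l. block_sel s l j)"

lemma cmat_norm_in_unit_interval:
  assumes "\<And>v. (\<Sum>j<n. (cmod (v j))\<^sup>2) \<le> 1 \<Longrightarrow> (\<Sum>i<m. (cmod (\<Sum>j<n. \<alpha> i j * v j))\<^sup>2) \<le> 1"
  shows "cmat_norm m n \<alpha> \<in> {0..1}"
proof -
  let ?S = "{sqrt (\<Sum>i<m. (cmod (\<Sum>j<n. \<alpha> i j * v j))\<^sup>2) | v. (\<Sum>j<n. (cmod (v j))\<^sup>2) \<le> 1}"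
  have bound: "s \<le> 1" if "s \<in> ?S" for s
    using that assms by auto
  have zero: "0 \<in> ?S"
    unfolding mem_Collect_eq by (rule exI[of _ "\<lambda>_. 0"]) simp
  have "bdd_above ?S"
    using bound by (intro bdd_aboveI) blast
  then have "0 \<le> Sup ?S"
    using zero by (rule cSup_upper[rotated])
  moreover have "Sup ?S \<le> 1"
    using zero bound by (intro cSup_least) blast+
  ultimately show ?thesis
    unfolding cmat_norm_def by simp
qed

lemma cmat_norm_block_sel:
  assumes "p + s \<le> N"
  shows "cmat_norm p N (block_sel s) \<in> {0..1}"
proof (rule cmat_norm_in_unit_interval)
  fix v :: "nat \<Rightarrow> complex"
  assume v: "(\<Sum>j<N. (cmod (v j))\<^sup>2) \<le> 1"
  have "(\<Sum>j<N. block_sel s i j * v j) = v (i + s)" if "i < p" for i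
    using that assms by (simp add: block_sel_def if_distrib[of "\<lambda>c. c * _"] sum.delta cong: if_cong)
  then have "(\<Sum>i<p. (cmod (\<Sum>j<N. block_sel s i j * v j))\<^sup>2) = (\<Sum>i\<in>(\<lambda>i. i + s) ` {..<p}. (cmod (v i))\<^sup>2)"
    by (simp add: sum.reindex)
  also have "\<dots> \<le> (\<Sum>j<N. (cmod (v j))\<^sup>2)"
    using assms by (intro sum_mono2) auto
  finally show "(\<Sum>i<p. (cmod (\<Sum>j<N. block_sel s i j * v j))\<^sup>2) \<le> 1"
    using v by linarith
qed

lemma cmat_norm_block_sel_adjoint:
  assumes "p + s \<le> N"
  shows "cmat_norm N p (\<lambda>j l. block_sel s l j) \<in> {0..1}"
proof (rule cmat_norm_in_unit_interval)
  fix v :: "nat \<Rightarrow> complex"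
  assume v: "(\<Sum>j<p. (cmod (v j))\<^sup>2) \<le> 1"
  define w where "w i = (if s \<le> i \<and> i - s < p then v (i - s) else 0)" for i
  have "(\<Sum>l<p. block_sel s l i * v l) = (\<Sum>l<p. if l = i - s \<and> s \<le> i then v l else 0)" for i
    by (rule sum.cong) (auto simp: block_sel_def)
  then have "(\<Sum>l<p. block_sel s l i * v l) = w i" for i
    by (cases "s \<le> i") (simp_all add: w_def sum.delta)
  then have "(\<Sum>i<N. (cmod (\<Sum>l<p. block_sel s l i * v l))\<^sup>2) = (\<Sum>i<N. (cmod (w i))\<^sup>2)"
    by simp
  also have "\<dots> = (\<Sum>i\<in>(\<lambda>l. l + s) ` {..<p}. (cmod (w i))\<^sup>2)"
    using assms by (intro sum.mono_neutral_right) (auto simp: w_def image_iff, metis le_add_diff_inverse2 lessThan_iff)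
  also have "\<dots> = (\<Sum>l<p. (cmod (v l))\<^sup>2)"
    by (simp add: sum.reindex w_def)
  finally show "(\<Sum>i<N. (cmod (\<Sum>l<p. block_sel s l i * v l))\<^sup>2) \<le> 1"
    using v by linarith
qed

context cvs
begin

lemma mat_block_entry:
  assumes z: "z \<in> car N" and "p + s \<le> N" "k < p" "l < p"
  shows "mat_block V N p s z k l = z (k + s) (l + s)"
proof -
  have "vsum V (\<lambda>j. vscale V (block_sel s k i * block_sel s l j) (z i j)) N =
        vscale V (block_sel s k i) (z i (l + s))" if "i < N" for i
    using z that assms by (subst vsum_delta[of "l + s"]) (auto simp: block_sel_def)
  then have "mat_block V N p s z k l = vsum V (\<lambda>i. vscale V (block_sel s k i) (z i (l + s))) N"
    using assms by (simp add: mat_block_def mat_lr_def)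
  also have "\<dots> = z (k + s) (l + s)"
    using z assms by (subst vsum_delta[of "k + s"]) (auto simp: block_sel_def)
  finally show ?thesis .
qed

lemma mat_block_in [simp]: "z \<in> car N \<Longrightarrow> mat_block V N p s z \<in> car p"
  by (simp add: mat_block_def)

lemma mat_block_dsum_fst:
  assumes "x \<in> car n" "y \<in> car m"
  shows "mat_block V (n + m) n 0 (mat_dsum V n m x y) = x"
proof (intro ext)
  fix k l
  have d: "mat_dsum V n m x y \<in> car (n + m)"
    using assms by simp
  show "mat_block V (n + m) n 0 (mat_dsum V n m x y) k l = x k l"
    using mat_block_entry[OF d, of n 0 k l] mat_outside[OF mat_block_in[OF d, of n 0], of k l]
      mat_outside[OF assms(1), of k l]
    by (cases "k < n \<and> l < n") (simp_all add: mat_dsum_def)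
qed

lemma mat_block_dsum_snd:
  assumes "x \<in> car n" "y \<in> car m"
  shows "mat_block V (n + m) m n (mat_dsum V n m x y) = y"
proof (intro ext)
  fix k l
  have d: "mat_dsum V n m x y \<in> car (n + m)"
    using assms by simp
  show "mat_block V (n + m) m n (mat_dsum V n m x y) k l = y k l"
    using mat_block_entry[OF d, of m n k l] mat_outside[OF mat_block_in[OF d, of m n], of k l]
      mat_outside[OF assms(2), of k l]
    by (cases "k < m \<and> l < m") (simp_all add: mat_dsum_def)
qed

end

locale op_space =
  fixes V :: "('v, 'z) mos_scheme"
  assumes operator_space: "operator_space V"
begin

sublocale cvs V
  using operator_space by unfold_locales (simp add: operator_space_def)

lemma mnorm_nonneg: "n \<ge> 1 \<Longrightarrow> x \<in> car n \<Longrightarrow> 0 \<le> mnorm V n x"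
  using operator_space unfolding operator_space_def by blast
lemma mnorm_eq_0D: "n \<ge> 1 \<Longrightarrow> x \<in> car n \<Longrightarrow> mnorm V n x = 0 \<Longrightarrow> x = mat_zero V"
  using operator_space unfolding operator_space_def by blast
lemma mnorm_scale: "n \<ge> 1 \<Longrightarrow> x \<in> car n \<Longrightarrow> mnorm V n (mat_scale V n c x) = cmod c * mnorm V n x"
  using operator_space unfolding operator_space_def by blast
lemma mnorm_triangle:
  "n \<ge> 1 \<Longrightarrow> x \<in> car n \<Longrightarrow> y \<in> car n \<Longrightarrow> mnorm V n (mat_add V n x y) \<le> mnorm V n x + mnorm V n y"
  using operator_space unfolding operator_space_def by blast
lemma mnorm_dsum:
  "n \<ge> 1 \<Longrightarrow> m \<ge> 1 \<Longrightarrow> x \<in> car n \<Longrightarrow> y \<in> car m \<Longrightarrow>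
   mnorm V (n + m) (mat_dsum V n m x y) = max (mnorm V n x) (mnorm V m y)"
  using operator_space unfolding operator_space_def by blast
lemma mnorm_lr_le:
  "n \<ge> 1 \<Longrightarrow> m \<ge> 1 \<Longrightarrow> x \<in> car n \<Longrightarrow>
   mnorm V m (mat_lr V n m \<alpha> x \<beta>) \<le> cmat_norm m n \<alpha> * mnorm V n x * cmat_norm n m \<beta>"
  using operator_space unfolding operator_space_def by blast

lemma mnorm_mat_block_le:
  assumes "N \<ge> 1" "p \<ge> 1" "p + s \<le> N" "z \<in> car N"
  shows "mnorm V p (mat_block V N p s z) \<le> mnorm V N z"
proof -
  have "mnorm V p (mat_block V N p s z) \<le>
        cmat_norm p N (block_sel s) * mnorm V N z * cmat_norm N p (\<lambda>j l. block_sel s l j)"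
    unfolding mat_block_def using assms by (intro mnorm_lr_le)
  also have "\<dots> \<le> 1 * mnorm V N z * 1"
    using cmat_norm_block_sel[of p s N] cmat_norm_block_sel_adjoint[of p s N] mnorm_nonneg[of N z] assms
    by (intro mult_mono) auto
  finally show ?thesis
    by simp
qed

end

locale involutive_op_space =
  fixes V :: "('v, 'z) mos_scheme"
  assumes involutive_os: "involutive_os V"
begin

sublocale op_space V
  using involutive_os by unfold_locales (simp add: involutive_os_def)

lemma star_in [simp]: "a \<in> vcar V \<Longrightarrow> vstar V a \<in> vcar V"
  using involutive_os unfolding involutive_os_def by blast
lemma star_star [simp]: "a \<in> vcar V \<Longrightarrow> vstar V (vstar V a) = a"
  using involutive_os unfolding involutive_os_def by blast
lemma star_add: "a \<in> vcar V \<Longrightarrow> b \<in> vcar V \<Longrightarrow> vstar V (vadd V a b) = vadd V (vstar V a) (vstar V b)"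
  using involutive_os unfolding involutive_os_def by blast
lemma star_scale: "a \<in> vcar V \<Longrightarrow> vstar V (vscale V c a) = vscale V (cnj c) (vstar V a)"
  using involutive_os unfolding involutive_os_def by blast
lemma mnorm_star: "n \<ge> 1 \<Longrightarrow> x \<in> car n \<Longrightarrow> mnorm V n (mat_star V n x) = mnorm V n x"
  using involutive_os unfolding involutive_os_def by blast

lemma mat_star_in [simp]: "x \<in> car n \<Longrightarrow> mat_star V n x \<in> car n"
  by (rule mat_carrierI) (auto simp: mat_star_def)
lemma mat_star_star: "x \<in> car n \<Longrightarrow> mat_star V n (mat_star V n x) = x"
  by (intro ext) (auto simp: mat_star_def mat_outside)

end

locale matrix_ordered =
  fixes V :: "('v, 'z) mos_scheme"
  assumes matrix_ordered_os: "matrix_ordered_os V"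
begin

sublocale involutive_op_space V
  using matrix_ordered_os by unfold_locales (simp add: matrix_ordered_os_def)

lemma pos_in_car: "n \<ge> 1 \<Longrightarrow> p \<in> mpos V n \<Longrightarrow> p \<in> car n"
  using matrix_ordered_os unfolding matrix_ordered_os_def by simp
lemma pos_self_adjoint: "n \<ge> 1 \<Longrightarrow> p \<in> mpos V n \<Longrightarrow> mat_star V n p = p"
  using matrix_ordered_os unfolding matrix_ordered_os_def by simp
lemma pos_closed: "n \<ge> 1 \<Longrightarrow> mat_closure V n (mpos V n) \<subseteq> mpos V n"
  using matrix_ordered_os unfolding matrix_ordered_os_def by simp
lemma pos_add: "n \<ge> 1 \<Longrightarrow> p \<in> mpos V n \<Longrightarrow> q \<in> mpos V n \<Longrightarrow> mat_add V n p q \<in> mpos V n"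
  using matrix_ordered_os unfolding matrix_ordered_os_def by simp
lemma pos_scale:
  "n \<ge> 1 \<Longrightarrow> t \<ge> 0 \<Longrightarrow> p \<in> mpos V n \<Longrightarrow> mat_scale V n (complex_of_real t) p \<in> mpos V n"
  using matrix_ordered_os unfolding matrix_ordered_os_def by simp
lemma pos_conj: "n \<ge> 1 \<Longrightarrow> m \<ge> 1 \<Longrightarrow> p \<in> mpos V n \<Longrightarrow> mat_conj V n m \<alpha> p \<in> mpos V m"
  using matrix_ordered_os unfolding matrix_ordered_os_def by simp
lemma pos_dsum:
  "n \<ge> 1 \<Longrightarrow> m \<ge> 1 \<Longrightarrow> p \<in> mpos V n \<Longrightarrow> q \<in> mpos V m \<Longrightarrow> mat_dsum V n m p q \<in> mpos V (n + m)"
  using matrix_ordered_os unfolding matrix_ordered_os_def by simp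
lemma pos_proper: "n \<ge> 1 \<Longrightarrow> p \<in> mpos V n \<Longrightarrow> mat_scale V n (-1) p \<in> mpos V n \<Longrightarrow> p = mat_zero V"
  using matrix_ordered_os unfolding matrix_ordered_os_def by simp

end

section \<open>The quotient by the kernel of a linear map\<close>

lemma quot_base_fields:
  "vcar (quot X J) = vcar (quot_base X J)" "vzero (quot X J) = vzero (quot_base X J)"
  "vadd (quot X J) = vadd (quot_base X J)" "vscale (quot X J) = vscale (quot_base X J)"
  "mnorm (quot X J) = mnorm (quot_base X J)"
  by (simp_all add: quot_def)

lemma mat_closure_quot: "mat_closure (quot X J) n S = mat_closure (quot_base X J) n S"
  unfolding mat_closure_def mat_carrier_def mat_sub_def mat_add_def mat_scale_def
  by (simp only: quot_base_fields)

locale kernel_quotient = X: involutive_op_space X + Y: cvs Y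
  for X :: "('a, 'c) mos_scheme" and Y :: "('b, 'd) mos_scheme" +
  fixes \<phi> :: "'a \<Rightarrow> 'b" and J :: "'a set"
  assumes phi_in [simp]: "a \<in> vcar X \<Longrightarrow> \<phi> a \<in> vcar Y"
    and phi_add: "a \<in> vcar X \<Longrightarrow> b \<in> vcar X \<Longrightarrow> \<phi> (vadd X a b) = vadd Y (\<phi> a) (\<phi> b)"
    and phi_scale: "a \<in> vcar X \<Longrightarrow> \<phi> (vscale X c a) = vscale Y c (\<phi> a)"
    and phi_star: "a \<in> vcar X \<Longrightarrow> \<phi> (vstar X a) = vstar Y (\<phi> a)"
    and J_def: "J = kernel_of X Y \<phi>"
begin

lemma phi_zero [simp]: "\<phi> (vzero X) = vzero Y"
  by (metis X.scale_zero_left X.zero_in Y.scale_zero_left phi_in phi_scale)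

lemma phi_vsum: "(\<And>i. i < k \<Longrightarrow> f i \<in> vcar X) \<Longrightarrow> \<phi> (vsum X f k) = vsum Y (\<lambda>i. \<phi> (f i)) k"
  by (induction k) (simp_all add: phi_add)

lemma mem_J_iff: "j \<in> J \<longleftrightarrow> j \<in> vcar X \<and> \<phi> j = vzero Y"
  by (simp add: J_def kernel_of_def)

lemma mem_coset_iff:
  assumes a: "a \<in> vcar X"
  shows "y \<in> coset X J a \<longleftrightarrow> y \<in> vcar X \<and> \<phi> y = \<phi> a"
proof
  assume "y \<in> coset X J a"
  then obtain j where "j \<in> J" "y = vadd X a j"
    unfolding coset_def by auto
  then show "y \<in> vcar X \<and> \<phi> y = \<phi> a"
    using a by (auto simp: mem_J_iff phi_add)
next
  assume y: "y \<in> vcar X \<and> \<phi> y = \<phi> a"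
  define j where "j = vadd X (vscale X (-1) a) y"
  have "j \<in> J"
    using y a by (auto simp: j_def mem_J_iff phi_add phi_scale Y.neg_add)
  moreover have "y = vadd X a j"
    using y a by (simp add: j_def X.add_neg_cancel_left)
  ultimately show "y \<in> coset X J a"
    unfolding coset_def by auto
qed

lemma coset_self: "a \<in> vcar X \<Longrightarrow> a \<in> coset X J a"
  by (simp add: mem_coset_iff)

lemma coset_eq_iff: "a \<in> vcar X \<Longrightarrow> b \<in> vcar X \<Longrightarrow> coset X J a = coset X J b \<longleftrightarrow> \<phi> a = \<phi> b"
  by (metis coset_self mem_coset_iff set_eqI)

lemma coset_zero: "coset X J (vzero X) = J"
  by (auto simp: mem_coset_iff mem_J_iff)

lemma set_plus_J_coset:
  assumes a: "a \<in> vcar X" and g: "\<And>b. b \<in> vcar X \<Longrightarrow> g b \<in> vcar X"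
    and g_coset: "\<And>b. b \<in> coset X J a \<Longrightarrow> \<phi> (g b) = \<phi> (g a)"
  shows "{vadd X (g b) j | b j. b \<in> coset X J a \<and> j \<in> J} = coset X J (g a)"
proof (intro set_eqI iffI)
  fix y
  assume "y \<in> {vadd X (g b) j | b j. b \<in> coset X J a \<and> j \<in> J}"
  then obtain b j where b: "b \<in> coset X J a" and j: "j \<in> J" and y: "y = vadd X (g b) j"
    by blast
  have "b \<in> vcar X"
    using b a by (simp add: mem_coset_iff)
  then show "y \<in> coset X J (g a)"
    using a g g_coset[OF b] j y by (simp add: mem_coset_iff mem_J_iff phi_add)
next
  fix y
  assume "y \<in> coset X J (g a)"
  then obtain j where "j \<in> J" "y = vadd X (g a) j"
    unfolding coset_def by blast
  then show "y \<in> {vadd X (g b) j | b j. b \<in> coset X J a \<and> j \<in> J}"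
    using coset_self[OF a] by blast
qed

abbreviation Q where "Q \<equiv> quot X J"

lemma quot_car: "vcar Q = {coset X J a | a. a \<in> vcar X}"
  by (simp add: quot_def quot_base_def)

lemma quot_zero: "vzero Q = coset X J (vzero X)"
  by (simp add: quot_def quot_base_def coset_zero)

lemma quot_add:
  assumes a: "a \<in> vcar X" and b: "b \<in> vcar X"
  shows "vadd Q (coset X J a) (coset X J b) = coset X J (vadd X a b)"
proof -
  have "{vadd X a' b' | a' b'. a' \<in> coset X J a \<and> b' \<in> coset X J b} = coset X J (vadd X a b)"
  proof (intro set_eqI iffI)
    fix y
    assume "y \<in> {vadd X a' b' | a' b'. a' \<in> coset X J a \<and> b' \<in> coset X J b}"
    then show "y \<in> coset X J (vadd X a b)"
      using a b by (auto simp: mem_coset_iff phi_add)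
  next
    fix y
    assume "y \<in> coset X J (vadd X a b)"
    then obtain j where j: "j \<in> J" "y = vadd X (vadd X a b) j"
      unfolding coset_def by auto
    have "vadd X a j \<in> coset X J a"
      using j unfolding coset_def by auto
    moreover have "y = vadd X (vadd X a j) b"
      using j a b by (auto simp: mem_J_iff X.add_ac)
    ultimately show "y \<in> {vadd X a' b' | a' b'. a' \<in> coset X J a \<and> b' \<in> coset X J b}"
      using coset_self[OF b] by blast
  qed
  then show ?thesis
    by (simp add: quot_def quot_base_def)
qed

lemma quot_scale: "a \<in> vcar X \<Longrightarrow> vscale Q c (coset X J a) = coset X J (vscale X c a)"
  using set_plus_J_coset[of a "vscale X c"]
  by (simp add: quot_def quot_base_def mem_coset_iff phi_scale)

lemma quot_star: "a \<in> vcar X \<Longrightarrow> vstar Q (coset X J a) = coset X J (vstar X a)"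
  using set_plus_J_coset[of a "vstar X"]
  by (simp add: quot_def quot_base_def mem_coset_iff phi_star)

lemma vsum_quot:
  "(\<And>i. i < k \<Longrightarrow> f i \<in> vcar X) \<Longrightarrow> vsum Q (\<lambda>i. coset X J (f i)) k = coset X J (vsum X f k)"
  by (induction k) (simp_all add: quot_zero quot_add)

lemma coset_in_quot_car [simp]: "a \<in> vcar X \<Longrightarrow> coset X J a \<in> vcar Q"
  by (auto simp: quot_car)

lemma ball_quot_carI: "(\<And>a. a \<in> vcar X \<Longrightarrow> P (coset X J a)) \<Longrightarrow> \<forall>A\<in>vcar Q. P A"
  by (auto simp: quot_car)

lemma cvector_space_quot: "cvector_space Q"
  unfolding cvector_space_def
  by (intro conjI allI ball_quot_carI)
    (simp_all add: quot_add quot_scale quot_zero X.add_ac X.scale_left_distrib X.scale_right_distrib X.add_neg)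

definition qmat :: "(nat \<Rightarrow> nat \<Rightarrow> 'a) \<Rightarrow> nat \<Rightarrow> nat \<Rightarrow> 'a set" where
  "qmat x = (\<lambda>i j. coset X J (x i j))"

abbreviation Phi where "Phi n x \<equiv> mat_map Y n \<phi> x"

lemma qmat_in [simp]: "x \<in> X.car n \<Longrightarrow> qmat x \<in> mat_carrier Q n"
  unfolding mat_carrier_def by (auto simp: qmat_def quot_car quot_zero X.mat_outside)

lemma qmat_cases:
  assumes S: "S \<in> mat_carrier Q n"
  obtains x where "x \<in> X.car n" "S = qmat x"
proof -
  have ex: "\<exists>a. a \<in> vcar X \<and> S i j = coset X J a" if "i < n" "j < n" for i j
    using S that unfolding mat_carrier_def quot_car by blast
  define x where "x i j = (if i < n \<and> j < n then SOME a. a \<in> vcar X \<and> S i j = coset X J a else vzero X)" for i j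
  have x: "x i j \<in> vcar X \<and> S i j = coset X J (x i j)" if "i < n" "j < n" for i j
    using someI_ex[OF ex[OF that]] that unfolding x_def by simp
  have "x \<in> X.car n"
    by (rule X.mat_carrierI) (use x in \<open>auto simp: x_def\<close>)
  moreover have "S = qmat x"
  proof (intro ext)
    fix i j
    show "S i j = qmat x i j"
    proof (cases "i < n \<and> j < n")
      case False
      then have "S i j = vzero Q" "x i j = vzero X"
        using S by (auto simp: mat_carrier_def x_def)
      then show ?thesis
        by (simp add: qmat_def quot_zero)
    qed (use x in \<open>simp add: qmat_def\<close>)
  qed
  ultimately show ?thesis
    using that by blast
qed

lemma Phi_in [simp]: "x \<in> X.car n \<Longrightarrow> Phi n x \<in> Y.car n"
  by (rule Y.mat_carrierI) (auto simp: mat_map_def)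

lemma qmat_eq_iff:
  assumes "x \<in> X.car n" "y \<in> X.car n"
  shows "qmat x = qmat y \<longleftrightarrow> Phi n x = Phi n y"
proof -
  have "qmat x i j = qmat y i j \<longleftrightarrow> Phi n x i j = Phi n y i j" for i j
    using assms by (cases "i < n \<and> j < n") (auto simp: qmat_def mat_map_def coset_eq_iff X.mat_outside)
  then show ?thesis
    by (simp add: fun_eq_iff)
qed

lemma Phi_zero: "Phi n (mat_zero X) = mat_zero Y"
  by (intro ext) (auto simp: mat_map_def mat_zero_def)
lemma Phi_add: "x \<in> X.car n \<Longrightarrow> y \<in> X.car n \<Longrightarrow> Phi n (mat_add X n x y) = mat_add Y n (Phi n x) (Phi n y)"
  by (intro ext) (auto simp: mat_map_def mat_add_def phi_add)
lemma Phi_scale: "x \<in> X.car n \<Longrightarrow> Phi n (mat_scale X n c x) = mat_scale Y n c (Phi n x)"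
  by (intro ext) (auto simp: mat_map_def mat_scale_def phi_scale)
lemma Phi_sub: "x \<in> X.car n \<Longrightarrow> y \<in> X.car n \<Longrightarrow> Phi n (mat_sub X n x y) = mat_sub Y n (Phi n x) (Phi n y)"
  by (simp add: mat_sub_def Phi_add Phi_scale)
lemma Phi_star: "x \<in> X.car n \<Longrightarrow> Phi n (mat_star X n x) = mat_star Y n (Phi n x)"
  by (intro ext) (auto simp: mat_map_def mat_star_def phi_star)
lemma Phi_dsum: "Phi (n + m) (mat_dsum X n m x y) = mat_dsum Y n m (Phi n x) (Phi m y)"
  by (intro ext) (auto simp: mat_map_def mat_dsum_def)
lemma Phi_lr: "x \<in> X.car n \<Longrightarrow> Phi m (mat_lr X n m \<alpha> x \<beta>) = mat_lr Y n m \<alpha> (Phi n x) \<beta>"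
  by (intro ext) (simp add: mat_map_def mat_lr_def phi_vsum phi_scale)

lemma qmat_zero: "mat_zero Q = qmat (mat_zero X)"
  by (simp add: mat_zero_def qmat_def quot_zero)
lemma qmat_add: "x \<in> X.car n \<Longrightarrow> y \<in> X.car n \<Longrightarrow> mat_add Q n (qmat x) (qmat y) = qmat (mat_add X n x y)"
  by (intro ext) (auto simp: mat_add_def qmat_def quot_add quot_zero)
lemma qmat_scale: "x \<in> X.car n \<Longrightarrow> mat_scale Q n c (qmat x) = qmat (mat_scale X n c x)"
  by (intro ext) (auto simp: mat_scale_def qmat_def quot_scale quot_zero)
lemma qmat_sub: "x \<in> X.car n \<Longrightarrow> y \<in> X.car n \<Longrightarrow> mat_sub Q n (qmat x) (qmat y) = qmat (mat_sub X n x y)"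
  by (simp add: mat_sub_def qmat_scale qmat_add)
lemma qmat_star: "x \<in> X.car n \<Longrightarrow> mat_star Q n (qmat x) = qmat (mat_star X n x)"
  by (intro ext) (auto simp: mat_star_def qmat_def quot_star quot_zero)
lemma qmat_dsum: "mat_dsum Q n m (qmat x) (qmat y) = qmat (mat_dsum X n m x y)"
  by (intro ext) (auto simp: mat_dsum_def qmat_def quot_zero)
lemma qmat_lr: "x \<in> X.car n \<Longrightarrow> mat_lr Q n m \<alpha> (qmat x) \<beta> = qmat (mat_lr X n m \<alpha> x \<beta>)"
  by (intro ext) (simp add: mat_lr_def qmat_def quot_scale vsum_quot quot_zero)
lemma qmat_conj: "x \<in> X.car n \<Longrightarrow> mat_conj Q n m \<alpha> (qmat x) = qmat (mat_conj X n m \<alpha> x)"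
  by (simp add: mat_conj_def qmat_lr)

lemma mpos_quot: "mpos Q n = mat_closure Q n (qmat ` mpos X n)"
proof -
  have "{(\<lambda>i j. coset X J (x i j)) | x. x \<in> mpos X n} = qmat ` mpos X n"
    by (auto simp: qmat_def)
  moreover have "mpos Q n = mat_closure (quot_base X J) n {(\<lambda>i j. coset X J (x i j)) | x. x \<in> mpos X n}"
    by (simp add: quot_def)
  ultimately show ?thesis
    by (simp add: mat_closure_quot)
qed

(* Fibres of Phi n are the cosets of M_n(J), so lifts n x is the class of x in M_n(X)/M_n(J). *)
definition lifts :: "nat \<Rightarrow> (nat \<Rightarrow> nat \<Rightarrow> 'a) \<Rightarrow> (nat \<Rightarrow> nat \<Rightarrow> 'a) set" where
  "lifts n x = {y \<in> X.car n. Phi n y = Phi n x}"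

definition qnorm :: "nat \<Rightarrow> (nat \<Rightarrow> nat \<Rightarrow> 'a) \<Rightarrow> real" where
  "qnorm n x = Inf (mnorm X n ` lifts n x)"

lemma mnorm_quot_qmat:
  assumes x: "x \<in> X.car n"
  shows "mnorm Q n (qmat x) = qnorm n x"
proof -
  have "(\<forall>i<n. \<forall>j<n. y i j \<in> qmat x i j) \<longleftrightarrow> Phi n y = Phi n x" if "y \<in> X.car n" for y
    using x that by (auto simp: fun_eq_iff mat_map_def qmat_def mem_coset_iff)
  then have "{mnorm X n y | y. y \<in> X.car n \<and> (\<forall>i<n. \<forall>j<n. y i j \<in> qmat x i j)} = mnorm X n ` lifts n x"
    unfolding lifts_def by blast
  then show ?thesis
    by (simp add: quot_def quot_base_def qnorm_def)
qed

lemma lifts_self: "x \<in> X.car n \<Longrightarrow> x \<in> lifts n x"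
  by (simp add: lifts_def)

lemma bdd_below_lifts: "n \<ge> 1 \<Longrightarrow> bdd_below (mnorm X n ` lifts n x)"
  by (rule bdd_belowI[of _ 0]) (auto simp: lifts_def X.mnorm_nonneg)

lemma qnorm_le: "n \<ge> 1 \<Longrightarrow> y \<in> lifts n x \<Longrightarrow> qnorm n x \<le> mnorm X n y"
  unfolding qnorm_def by (rule cINF_lower[OF bdd_below_lifts])

lemma qnorm_greatest: "x \<in> X.car n \<Longrightarrow> (\<And>y. y \<in> lifts n x \<Longrightarrow> a \<le> mnorm X n y) \<Longrightarrow> a \<le> qnorm n x"
  unfolding qnorm_def by (rule cINF_greatest) (auto dest: lifts_self)

lemma qnorm_less_iff: "n \<ge> 1 \<Longrightarrow> x \<in> X.car n \<Longrightarrow> qnorm n x < a \<longleftrightarrow> (\<exists>y\<in>lifts n x. mnorm X n y < a)"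
  unfolding qnorm_def by (rule cINF_less_iff) (auto dest: lifts_self intro: bdd_below_lifts)

lemma qnorm_le_mnorm: "n \<ge> 1 \<Longrightarrow> x \<in> X.car n \<Longrightarrow> qnorm n x \<le> mnorm X n x"
  by (simp add: qnorm_le lifts_self)

lemma qnorm_nonneg: "n \<ge> 1 \<Longrightarrow> x \<in> X.car n \<Longrightarrow> 0 \<le> qnorm n x"
  by (rule qnorm_greatest) (auto simp: lifts_def X.mnorm_nonneg)

lemma qnorm_image_le:
  assumes n: "n \<ge> 1" and m: "m \<ge> 1" and x: "x \<in> X.car n"
    and lifts: "\<And>y. y \<in> lifts n x \<Longrightarrow> f y \<in> lifts m (f x)"
    and bound: "\<And>y. y \<in> lifts n x \<Longrightarrow> mnorm X m (f y) \<le> K * mnorm X n y"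
  shows "qnorm m (f x) \<le> K * qnorm n x"
proof -
  have le: "qnorm m (f x) \<le> K * mnorm X n y" if "y \<in> lifts n x" for y
    using qnorm_le[OF m lifts[OF that]] bound[OF that] by linarith
  show ?thesis
  proof (cases "K > 0")
    case True
    have "qnorm m (f x) / K \<le> qnorm n x"
      using le True by (intro qnorm_greatest[OF x]) (simp add: divide_le_eq mult.commute)
    then show ?thesis
      using True by (simp add: divide_le_eq mult.commute)
  next
    case False
    have "qnorm m (f x) \<le> K * mnorm X n x"
      using le[OF lifts_self[OF x]] .
    also have "\<dots> \<le> K * qnorm n x"
      using False qnorm_le_mnorm[OF n x] by (intro mult_left_mono_neg) auto
    finally show ?thesis .
  qed
qed

lemma qnorm_scale_le:
  assumes n: "n \<ge> 1" and x: "x \<in> X.car n"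
  shows "qnorm n (mat_scale X n c x) \<le> cmod c * qnorm n x"
proof (rule qnorm_image_le[OF n n x])
  fix y
  assume y: "y \<in> lifts n x"
  then show "mat_scale X n c y \<in> lifts n (mat_scale X n c x)"
    using x by (auto simp: lifts_def Phi_scale)
  show "mnorm X n (mat_scale X n c y) \<le> cmod c * mnorm X n y"
    using y X.mnorm_scale[OF n] by (simp add: lifts_def)
qed

lemma qnorm_scale:
  assumes n: "n \<ge> 1" and x: "x \<in> X.car n"
  shows "qnorm n (mat_scale X n c x) = cmod c * qnorm n x"
proof (cases "c = 0")
  case True
  then show ?thesis
    using qnorm_scale_le[OF n x, of c] qnorm_nonneg[OF n, of "mat_scale X n c x"] x by simp
next
  case False
  have "qnorm n x = qnorm n (mat_scale X n (1 / c) (mat_scale X n c x))"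
    using X.mat_scale_inverse[OF x False] by simp
  also have "\<dots> \<le> cmod (1 / c) * qnorm n (mat_scale X n c x)"
    using x by (intro qnorm_scale_le[OF n]) simp
  finally have "cmod c * qnorm n x \<le> qnorm n (mat_scale X n c x)"
    using False by (simp add: norm_divide field_simps)
  then show ?thesis
    using qnorm_scale_le[OF n x, of c] by simp
qed

lemma qnorm_star_le:
  assumes n: "n \<ge> 1" and x: "x \<in> X.car n"
  shows "qnorm n (mat_star X n x) \<le> qnorm n x"
proof -
  have "qnorm n (mat_star X n x) \<le> 1 * qnorm n x"
  proof (rule qnorm_image_le[OF n n x])
    fix y
    assume y: "y \<in> lifts n x"
    then show "mat_star X n y \<in> lifts n (mat_star X n x)"
      using x by (auto simp: lifts_def Phi_star)
    show "mnorm X n (mat_star X n y) \<le> 1 * mnorm X n y"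
      using y X.mnorm_star[OF n] by (simp add: lifts_def)
  qed
  then show ?thesis
    by simp
qed

lemma qnorm_star:
  assumes n: "n \<ge> 1" and x: "x \<in> X.car n"
  shows "qnorm n (mat_star X n x) = qnorm n x"
  using qnorm_star_le[OF n x] qnorm_star_le[OF n X.mat_star_in[OF x]] X.mat_star_star[OF x] by simp

lemma lifts_mat_lr: "x \<in> X.car n \<Longrightarrow> y \<in> lifts n x \<Longrightarrow> mat_lr X n m \<alpha> y \<beta> \<in> lifts m (mat_lr X n m \<alpha> x \<beta>)"
  by (simp add: lifts_def Phi_lr)

lemma qnorm_lr_le:
  assumes n: "n \<ge> 1" and m: "m \<ge> 1" and x: "x \<in> X.car n"
  shows "qnorm m (mat_lr X n m \<alpha> x \<beta>) \<le> cmat_norm m n \<alpha> * qnorm n x * cmat_norm n m \<beta>"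
proof -
  have "qnorm m (mat_lr X n m \<alpha> x \<beta>) \<le> (cmat_norm m n \<alpha> * cmat_norm n m \<beta>) * qnorm n x"
  proof (rule qnorm_image_le[OF n m x])
    fix y
    assume "y \<in> lifts n x"
    then show "mnorm X m (mat_lr X n m \<alpha> y \<beta>) \<le> (cmat_norm m n \<alpha> * cmat_norm n m \<beta>) * mnorm X n y"
      using X.mnorm_lr_le[OF n m, of y \<alpha> \<beta>] by (simp add: lifts_def algebra_simps)
  qed (rule lifts_mat_lr[OF x])
  then show ?thesis
    by (simp add: algebra_simps)
qed

lemma qnorm_mat_block_le:
  assumes N: "N \<ge> 1" and p: "p \<ge> 1" and ps: "p + s \<le> N" and z: "z \<in> X.car N"
  shows "qnorm p (mat_block X N p s z) \<le> qnorm N z"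
proof -
  have "qnorm p (mat_block X N p s z) \<le> 1 * qnorm N z"
  proof (rule qnorm_image_le[OF N p z])
    fix y
    assume y: "y \<in> lifts N z"
    then show "mat_block X N p s y \<in> lifts p (mat_block X N p s z)"
      using lifts_mat_lr[OF z y] by (simp add: mat_block_def)
    show "mnorm X p (mat_block X N p s y) \<le> 1 * mnorm X N y"
      using y X.mnorm_mat_block_le[OF N p ps] by (simp add: lifts_def)
  qed
  then show ?thesis
    by simp
qed

lemma qnorm_triangle:
  assumes n: "n \<ge> 1" and x: "x \<in> X.car n" and y: "y \<in> X.car n"
  shows "qnorm n (mat_add X n x y) \<le> qnorm n x + qnorm n y"
proof -
  have sum: "qnorm n (mat_add X n x y) \<le> mnorm X n x' + mnorm X n y'"
    if x': "x' \<in> lifts n x" and y': "y' \<in> lifts n y" for x' y'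
  proof -
    have "mat_add X n x' y' \<in> lifts n (mat_add X n x y)"
      using x' y' x y by (auto simp: lifts_def Phi_add)
    then have "qnorm n (mat_add X n x y) \<le> mnorm X n (mat_add X n x' y')"
      by (rule qnorm_le[OF n])
    also have "\<dots> \<le> mnorm X n x' + mnorm X n y'"
      using x' y' by (intro X.mnorm_triangle[OF n]) (auto simp: lifts_def)
    finally show ?thesis .
  qed
  have "qnorm n (mat_add X n x y) - qnorm n x \<le> mnorm X n y'" if y': "y' \<in> lifts n y" for y'
  proof -
    have "qnorm n (mat_add X n x y) - mnorm X n y' \<le> qnorm n x"
      by (rule qnorm_greatest[OF x]) (use sum y' in force)
    then show ?thesis
      by linarith
  qed
  then have "qnorm n (mat_add X n x y) - qnorm n x \<le> qnorm n y"
    by (rule qnorm_greatest[OF y])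
  then show ?thesis
    by linarith
qed

lemma qnorm_dsum:
  assumes n: "n \<ge> 1" and m: "m \<ge> 1" and x: "x \<in> X.car n" and y: "y \<in> X.car m"
  shows "qnorm (n + m) (mat_dsum X n m x y) = max (qnorm n x) (qnorm m y)"
proof (rule antisym)
  let ?d = "mat_dsum X n m x y"
  have nm: "n + m \<ge> 1"
    using n by simp
  show "qnorm (n + m) ?d \<le> max (qnorm n x) (qnorm m y)"
  proof (rule ccontr)
    assume "\<not> ?thesis"
    then obtain x' y' where x': "x' \<in> lifts n x" "mnorm X n x' < qnorm (n + m) ?d"
      and y': "y' \<in> lifts m y" "mnorm X m y' < qnorm (n + m) ?d"
      using qnorm_less_iff[OF n x] qnorm_less_iff[OF m y] by (meson max.strict_boundedE not_le)
    have "mat_dsum X n m x' y' \<in> lifts (n + m) ?d"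
      using x'(1) y'(1) by (auto simp: lifts_def Phi_dsum)
    then have "qnorm (n + m) ?d \<le> mnorm X (n + m) (mat_dsum X n m x' y')"
      by (rule qnorm_le[OF nm])
    also have "\<dots> = max (mnorm X n x') (mnorm X m y')"
      using x'(1) y'(1) by (intro X.mnorm_dsum[OF n m]) (auto simp: lifts_def)
    finally show False
      using x'(2) y'(2) by linarith
  qed
  have "qnorm n x \<le> qnorm (n + m) ?d"
    using qnorm_mat_block_le[OF nm n, of 0 ?d] X.mat_block_dsum_fst[OF x y] x y by simp
  moreover have "qnorm m y \<le> qnorm (n + m) ?d"
    using qnorm_mat_block_le[OF nm m, of n ?d] X.mat_block_dsum_snd[OF x y] x y by simp
  ultimately show "max (qnorm n x) (qnorm m y) \<le> qnorm (n + m) ?d"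
    by simp
qed

end

section \<open>Quotients by kernels of ccp maps\<close>

locale ccp_kernel_quotient = X: matrix_ordered X + Y: matrix_ordered Y
  for X :: "('a, 'c) mos_scheme" and Y :: "('b, 'd) mos_scheme" +
  fixes \<phi> :: "'a \<Rightarrow> 'b" and J :: "'a set"
  assumes ccp: "ccp_map X Y \<phi>" and J_kernel: "J = kernel_of X Y \<phi>"
begin

sublocale kernel_quotient X Y \<phi> J
  by (unfold_locales; insert X.involutive_os Y.cvector_space ccp J_kernel; simp add: ccp_map_def)

lemma mnorm_Phi_le: "n \<ge> 1 \<Longrightarrow> x \<in> X.car n \<Longrightarrow> mnorm Y n (Phi n x) \<le> mnorm X n x"
  using ccp unfolding ccp_map_def by simp

lemma Phi_pos: "n \<ge> 1 \<Longrightarrow> x \<in> mpos X n \<Longrightarrow> Phi n x \<in> mpos Y n"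
  using ccp unfolding ccp_map_def by simp

lemma mnorm_Phi_le_qnorm:
  assumes n: "n \<ge> 1" and x: "x \<in> X.car n"
  shows "mnorm Y n (Phi n x) \<le> qnorm n x"
proof (rule qnorm_greatest[OF x])
  fix y
  assume "y \<in> lifts n x"
  then have "y \<in> X.car n" "Phi n x = Phi n y"
    by (auto simp: lifts_def)
  then show "mnorm Y n (Phi n x) \<le> mnorm X n y"
    using mnorm_Phi_le[OF n] by simp
qed

lemma ball_mat_carrier_quotI: "(\<And>x. x \<in> X.car n \<Longrightarrow> P (qmat x)) \<Longrightarrow> \<forall>S\<in>mat_carrier Q n. P S"
  by (metis qmat_cases)

lemma operator_space_quot: "operator_space Q"
  unfolding operator_space_def
proof (intro conjI)
  show "cvector_space Q"
    by (rule cvector_space_quot)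
  show "\<forall>n\<ge>1. \<forall>x\<in>mat_carrier Q n. 0 \<le> mnorm Q n x"
    by (intro allI impI ball_mat_carrier_quotI) (simp add: mnorm_quot_qmat qnorm_nonneg)
  show "\<forall>n\<ge>1. \<forall>x\<in>mat_carrier Q n. mnorm Q n x = 0 \<longrightarrow> x = mat_zero Q"
  proof (intro allI impI ball_mat_carrier_quotI)
    fix n x
    assume n: "n \<ge> 1" and x: "x \<in> X.car n" and "mnorm Q n (qmat x) = 0"
    then have "mnorm Y n (Phi n x) \<le> 0"
      using mnorm_Phi_le_qnorm[OF n x] by (simp add: mnorm_quot_qmat)
    then have "Phi n x = mat_zero Y"
      using Y.mnorm_nonneg[OF n Phi_in[OF x]] Y.mnorm_eq_0D[OF n Phi_in[OF x]] by simp
    then show "qmat x = mat_zero Q"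
      using qmat_eq_iff[OF x X.mat_zero_in] by (simp add: qmat_zero Phi_zero)
  qed
  show "\<forall>n\<ge>1. \<forall>c. \<forall>x\<in>mat_carrier Q n. mnorm Q n (mat_scale Q n c x) = cmod c * mnorm Q n x"
    by (intro allI impI ball_mat_carrier_quotI) (simp add: qmat_scale mnorm_quot_qmat qnorm_scale)
  show "\<forall>n\<ge>1. \<forall>x\<in>mat_carrier Q n. \<forall>y\<in>mat_carrier Q n.
          mnorm Q n (mat_add Q n x y) \<le> mnorm Q n x + mnorm Q n y"
    by (intro allI impI ball_mat_carrier_quotI) (simp add: qmat_add mnorm_quot_qmat qnorm_triangle)
  show "\<forall>n\<ge>1. \<forall>m\<ge>1. \<forall>x\<in>mat_carrier Q n. \<forall>y\<in>mat_carrier Q m.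
          mnorm Q (n + m) (mat_dsum Q n m x y) = max (mnorm Q n x) (mnorm Q m y)"
    by (intro allI impI ball_mat_carrier_quotI) (simp add: qmat_dsum mnorm_quot_qmat qnorm_dsum)
  show "\<forall>n\<ge>1. \<forall>m\<ge>1. \<forall>x\<in>mat_carrier Q n. \<forall>\<alpha> \<beta>.
          mnorm Q m (mat_lr Q n m \<alpha> x \<beta>) \<le> cmat_norm m n \<alpha> * mnorm Q n x * cmat_norm n m \<beta>"
    by (intro allI impI ball_mat_carrier_quotI) (simp add: qmat_lr mnorm_quot_qmat qnorm_lr_le)
qed

lemma involutive_os_quot: "involutive_os Q"
  unfolding involutive_os_def
proof (intro conjI)
  show "operator_space Q"
    by (rule operator_space_quot)
  show "\<forall>n\<ge>1. \<forall>x\<in>mat_carrier Q n. mnorm Q n (mat_star Q n x) = mnorm Q n x"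
    by (intro allI impI ball_mat_carrier_quotI) (simp add: qmat_star mnorm_quot_qmat qnorm_star)
qed (intro allI ball_quot_carI; simp add: quot_star quot_add quot_scale X.star_add X.star_scale)+

definition quot_pos :: "nat \<Rightarrow> (nat \<Rightarrow> nat \<Rightarrow> 'a) \<Rightarrow> bool" where
  "quot_pos n x \<longleftrightarrow> x \<in> X.car n \<and> (\<forall>\<epsilon>>0. \<exists>p\<in>mpos X n. qnorm n (mat_sub X n x p) < \<epsilon>)"

lemma qmat_mpos_quot_iff:
  assumes n: "n \<ge> 1" and x: "x \<in> X.car n"
  shows "qmat x \<in> mpos Q n \<longleftrightarrow> quot_pos n x"
proof -
  have "mnorm Q n (mat_sub Q n (qmat x) (qmat p)) = qnorm n (mat_sub X n x p)" if "p \<in> mpos X n" for p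
    using X.pos_in_car[OF n that] x by (simp add: qmat_sub mnorm_quot_qmat)
  then show ?thesis
    using x by (auto simp: quot_pos_def mpos_quot mat_closure_def)
qed

lemma mpos_quot_cases:
  assumes "S \<in> mpos Q n"
  obtains x where "x \<in> X.car n" "S = qmat x"
  using assms qmat_cases by (auto simp: mpos_quot mat_closure_def)

lemma qmat_mpos_quotI: "n \<ge> 1 \<Longrightarrow> quot_pos n x \<Longrightarrow> qmat x \<in> mpos Q n"
  using qmat_mpos_quot_iff by (simp add: quot_pos_def)

lemma mpos_quotE:
  assumes n: "n \<ge> 1" and S: "S \<in> mpos Q n"
  obtains x where "quot_pos n x" "S = qmat x"
proof -
  obtain x where x: "x \<in> X.car n" "S = qmat x"
    using mpos_quot_cases[OF S] .
  then have "quot_pos n x"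
    using S qmat_mpos_quot_iff[OF n] by simp
  with x that show ?thesis
    by blast
qed

lemma quot_pos_Phi:
  assumes n: "n \<ge> 1" and pos: "quot_pos n x"
  shows "Phi n x \<in> mpos Y n"
proof -
  have x: "x \<in> X.car n"
    using pos by (simp add: quot_pos_def)
  have "Phi n x \<in> mat_closure Y n (mpos Y n)"
    unfolding mat_closure_def
  proof (intro CollectI conjI allI impI)
    show "Phi n x \<in> Y.car n"
      using x by simp
    fix \<epsilon> :: real
    assume "\<epsilon> > 0"
    then obtain p where p: "p \<in> mpos X n" "qnorm n (mat_sub X n x p) < \<epsilon>"
      using pos by (auto simp: quot_pos_def)
    have "p \<in> X.car n"
      using X.pos_in_car[OF n p(1)] .
    then have "mnorm Y n (mat_sub Y n (Phi n x) (Phi n p)) \<le> qnorm n (mat_sub X n x p)"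
      using mnorm_Phi_le_qnorm[OF n, of "mat_sub X n x p"] x by (simp add: Phi_sub)
    then show "\<exists>q\<in>mpos Y n. mnorm Y n (mat_sub Y n (Phi n x) q) < \<epsilon>"
      using p Phi_pos[OF n p(1)] by force
  qed
  then show ?thesis
    using Y.pos_closed[OF n] by blast
qed

lemma quot_pos_image:
  assumes n: "n \<ge> 1" and pos: "quot_pos n x" and fx: "f x \<in> X.car m"
    and f_pos: "\<And>p. p \<in> mpos X n \<Longrightarrow> f p \<in> mpos X m"
    and f_bound: "\<And>p. p \<in> mpos X n \<Longrightarrow>
      qnorm m (mat_sub X m (f x) (f p)) \<le> K * qnorm n (mat_sub X n x p)"
  shows "quot_pos m (f x)"
  unfolding quot_pos_def
proof (intro conjI allI impI)
  show "f x \<in> X.car m"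
    by (rule fx)
  fix \<epsilon> :: real
  assume "\<epsilon> > 0"
  then have "\<epsilon> / (\<bar>K\<bar> + 1) > 0"
    by simp
  then obtain p where p: "p \<in> mpos X n" "qnorm n (mat_sub X n x p) < \<epsilon> / (\<bar>K\<bar> + 1)"
    using pos unfolding quot_pos_def by blast
  have "0 \<le> qnorm n (mat_sub X n x p)"
    using X.pos_in_car[OF n p(1)] pos by (intro qnorm_nonneg[OF n]) (simp add: quot_pos_def)
  then have "K * qnorm n (mat_sub X n x p) \<le> \<bar>K\<bar> * qnorm n (mat_sub X n x p)"
    by (intro mult_right_mono) simp_all
  with f_bound[OF p(1)] have "qnorm m (mat_sub X m (f x) (f p)) \<le> \<bar>K\<bar> * qnorm n (mat_sub X n x p)"
    by linarith
  also have "\<dots> \<le> \<bar>K\<bar> * (\<epsilon> / (\<bar>K\<bar> + 1))"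
    using p(2) by (intro mult_left_mono) auto
  also have "\<dots> < \<epsilon>"
    using \<open>\<epsilon> > 0\<close> by (simp add: field_simps)
  finally show "\<exists>q\<in>mpos X m. qnorm m (mat_sub X m (f x) q) < \<epsilon>"
    using f_pos[OF p(1)] by blast
qed

lemma quot_pos_image2:
  assumes x: "quot_pos n x" and y: "quot_pos m y" and fxy: "f x y \<in> X.car k"
    and f_pos: "\<And>p q. p \<in> mpos X n \<Longrightarrow> q \<in> mpos X m \<Longrightarrow> f p q \<in> mpos X k"
    and f_bound: "\<And>p q. p \<in> mpos X n \<Longrightarrow> q \<in> mpos X m \<Longrightarrow>
      qnorm k (mat_sub X k (f x y) (f p q)) \<le> qnorm n (mat_sub X n x p) + qnorm m (mat_sub X m y q)"
  shows "quot_pos k (f x y)"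
  unfolding quot_pos_def
proof (intro conjI allI impI)
  show "f x y \<in> X.car k"
    by (rule fxy)
  fix \<epsilon> :: real
  assume "\<epsilon> > 0"
  then obtain p q where p: "p \<in> mpos X n" "qnorm n (mat_sub X n x p) < \<epsilon> / 2"
    and q: "q \<in> mpos X m" "qnorm m (mat_sub X m y q) < \<epsilon> / 2"
    using x y unfolding quot_pos_def by (meson half_gt_zero)
  then have "qnorm k (mat_sub X k (f x y) (f p q)) < \<epsilon>"
    using f_bound[OF p(1) q(1)] by linarith
  then show "\<exists>r\<in>mpos X k. qnorm k (mat_sub X k (f x y) r) < \<epsilon>"
    using f_pos[OF p(1) q(1)] by blast
qed

lemma mpos_quot_self_adjoint:
  assumes n: "n \<ge> 1" and S: "S \<in> mpos Q n"
  shows "S \<in> mat_carrier Q n \<and> mat_star Q n S = S"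
proof -
  obtain x where pos: "quot_pos n x" and S_eq: "S = qmat x"
    using mpos_quotE[OF n S] .
  have x: "x \<in> X.car n"
    using pos by (simp add: quot_pos_def)
  have "Phi n (mat_star X n x) = Phi n x"
    using Phi_star[OF x] Y.pos_self_adjoint[OF n quot_pos_Phi[OF n pos]] by simp
  then have "qmat (mat_star X n x) = qmat x"
    using qmat_eq_iff[OF X.mat_star_in[OF x] x] by simp
  then show ?thesis
    using x S_eq by (simp add: qmat_star)
qed

lemma quot_pos_approx:
  assumes n: "n \<ge> 1" and x: "x \<in> X.car n"
    and approx: "\<And>\<epsilon>. \<epsilon> > 0 \<Longrightarrow> \<exists>x'. quot_pos n x' \<and> qnorm n (mat_sub X n x x') < \<epsilon>"
  shows "quot_pos n x"
  unfolding quot_pos_def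
proof (intro conjI allI impI)
  show "x \<in> X.car n"
    by (rule x)
  fix \<epsilon> :: real
  assume "\<epsilon> > 0"
  then obtain x' where pos': "quot_pos n x'" and close: "qnorm n (mat_sub X n x x') < \<epsilon> / 2"
    using approx[of "\<epsilon> / 2"] by auto
  have x': "x' \<in> X.car n"
    using pos' by (simp add: quot_pos_def)
  obtain p where p: "p \<in> mpos X n" "qnorm n (mat_sub X n x' p) < \<epsilon> / 2"
    using pos' \<open>\<epsilon> > 0\<close> unfolding quot_pos_def by (meson half_gt_zero)
  have p_car: "p \<in> X.car n"
    using X.pos_in_car[OF n p(1)] .
  have "qnorm n (mat_sub X n x p) \<le> qnorm n (mat_sub X n x x') + qnorm n (mat_sub X n x' p)"
    using X.mat_sub_telescope[OF x x' p_car] qnorm_triangle[OF n] x x' p_car by simp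
  also have "\<dots> < \<epsilon>"
    using close p(2) by linarith
  finally show "\<exists>p\<in>mpos X n. qnorm n (mat_sub X n x p) < \<epsilon>"
    using p(1) by blast
qed

lemma mpos_quot_closed:
  assumes n: "n \<ge> 1"
  shows "mat_closure Q n (mpos Q n) \<subseteq> mpos Q n"
proof
  fix S
  assume S: "S \<in> mat_closure Q n (mpos Q n)"
  then obtain x where x: "x \<in> X.car n" and S_eq: "S = qmat x"
    using qmat_cases unfolding mat_closure_def by blast
  have "quot_pos n x"
  proof (rule quot_pos_approx[OF n x])
    fix \<epsilon> :: real
    assume "\<epsilon> > 0"
    then obtain T where T: "T \<in> mpos Q n" "mnorm Q n (mat_sub Q n S T) < \<epsilon>"
      using S unfolding mat_closure_def by blast
    obtain x' where "quot_pos n x'" "T = qmat x'"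
      using mpos_quotE[OF n T(1)] .
    then show "\<exists>x'. quot_pos n x' \<and> qnorm n (mat_sub X n x x') < \<epsilon>"
      using T(2) x by (auto simp: S_eq qmat_sub mnorm_quot_qmat quot_pos_def)
  qed
  then show "S \<in> mpos Q n"
    using qmat_mpos_quotI[OF n] S_eq by simp
qed

lemma mpos_quot_add:
  assumes n: "n \<ge> 1" and S: "S \<in> mpos Q n" and T: "T \<in> mpos Q n"
  shows "mat_add Q n S T \<in> mpos Q n"
proof -
  obtain x y where x: "quot_pos n x" "S = qmat x" and y: "quot_pos n y" "T = qmat y"
    using mpos_quotE[OF n S] mpos_quotE[OF n T] by metis
  have car: "x \<in> X.car n" "y \<in> X.car n"
    using x y by (simp_all add: quot_pos_def)
  have "quot_pos n (mat_add X n x y)"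
  proof (rule quot_pos_image2[OF x(1) y(1)])
    show "mat_add X n x y \<in> X.car n"
      using car by simp
    fix p q
    assume p: "p \<in> mpos X n" and q: "q \<in> mpos X n"
    show "mat_add X n p q \<in> mpos X n"
      by (rule X.pos_add[OF n p q])
    have "p \<in> X.car n" "q \<in> X.car n"
      using X.pos_in_car[OF n] p q by auto
    then show "qnorm n (mat_sub X n (mat_add X n x y) (mat_add X n p q)) \<le>
               qnorm n (mat_sub X n x p) + qnorm n (mat_sub X n y q)"
      using car qnorm_triangle[OF n, of "mat_sub X n x p" "mat_sub X n y q"] by (simp add: X.mat_sub_add_add)
  qed
  then show ?thesis
    using car x y qmat_mpos_quotI[OF n] by (simp add: qmat_add)
qed

lemma mpos_quot_scale:
  assumes n: "n \<ge> 1" and t: "t \<ge> 0" and S: "S \<in> mpos Q n"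
  shows "mat_scale Q n (complex_of_real t) S \<in> mpos Q n"
proof -
  obtain x where x: "quot_pos n x" "S = qmat x"
    using mpos_quotE[OF n S] .
  have car: "x \<in> X.car n"
    using x by (simp add: quot_pos_def)
  have "quot_pos n (mat_scale X n (complex_of_real t) x)"
  proof (rule quot_pos_image[OF n x(1)])
    show "mat_scale X n (complex_of_real t) x \<in> X.car n"
      using car by simp
    fix p
    assume p: "p \<in> mpos X n"
    show "mat_scale X n (complex_of_real t) p \<in> mpos X n"
      by (rule X.pos_scale[OF n t p])
    show "qnorm n (mat_sub X n (mat_scale X n (complex_of_real t) x) (mat_scale X n (complex_of_real t) p))
          \<le> t * qnorm n (mat_sub X n x p)"
      using X.pos_in_car[OF n p] car t qnorm_scale[OF n, of "mat_sub X n x p"] by (simp add: X.mat_sub_scale_scale)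
  qed
  then show ?thesis
    using car x qmat_mpos_quotI[OF n] by (simp add: qmat_scale)
qed

lemma mpos_quot_conj:
  assumes n: "n \<ge> 1" and m: "m \<ge> 1" and S: "S \<in> mpos Q n"
  shows "mat_conj Q n m \<alpha> S \<in> mpos Q m"
proof -
  obtain x where x: "quot_pos n x" "S = qmat x"
    using mpos_quotE[OF n S] .
  have car: "x \<in> X.car n"
    using x by (simp add: quot_pos_def)
  have "quot_pos m (mat_conj X n m \<alpha> x)"
  proof (rule quot_pos_image[OF n x(1)])
    show "mat_conj X n m \<alpha> x \<in> X.car m"
      using car by simp
    fix p
    assume p: "p \<in> mpos X n"
    show "mat_conj X n m \<alpha> p \<in> mpos X m"
      by (rule X.pos_conj[OF n m p])
    have "p \<in> X.car n"
      using X.pos_in_car[OF n p] .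
    then show "qnorm m (mat_sub X m (mat_conj X n m \<alpha> x) (mat_conj X n m \<alpha> p))
          \<le> (cmat_norm m n (\<lambda>k i. cnj (\<alpha> i k)) * cmat_norm n m \<alpha>) * qnorm n (mat_sub X n x p)"
      using X.mat_conj_sub[of x n p m \<alpha>] qnorm_lr_le[OF n m, of "mat_sub X n x p" "\<lambda>k i. cnj (\<alpha> i k)" \<alpha>] car
      by (simp add: mat_conj_def algebra_simps)
  qed
  then show ?thesis
    using car x qmat_mpos_quotI[OF m] by (simp add: qmat_conj)
qed

lemma mpos_quot_dsum:
  assumes n: "n \<ge> 1" and m: "m \<ge> 1" and S: "S \<in> mpos Q n" and T: "T \<in> mpos Q m"
  shows "mat_dsum Q n m S T \<in> mpos Q (n + m)"
proof -
  obtain x y where x: "quot_pos n x" "S = qmat x" and y: "quot_pos m y" "T = qmat y"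
    using mpos_quotE[OF n S] mpos_quotE[OF m T] by metis
  have car: "x \<in> X.car n" "y \<in> X.car m"
    using x y by (simp_all add: quot_pos_def)
  have "quot_pos (n + m) (mat_dsum X n m x y)"
  proof (rule quot_pos_image2[OF x(1) y(1)])
    show "mat_dsum X n m x y \<in> X.car (n + m)"
      using car by simp
    fix p q
    assume p: "p \<in> mpos X n" and q: "q \<in> mpos X m"
    show "mat_dsum X n m p q \<in> mpos X (n + m)"
      by (rule X.pos_dsum[OF n m p q])
    have "p \<in> X.car n" "q \<in> X.car m"
      using X.pos_in_car[OF n p] X.pos_in_car[OF m q] by auto
    then show "qnorm (n + m) (mat_sub X (n + m) (mat_dsum X n m x y) (mat_dsum X n m p q)) \<le>
               qnorm n (mat_sub X n x p) + qnorm m (mat_sub X m y q)"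
      using car qnorm_nonneg[OF n, of "mat_sub X n x p"] qnorm_nonneg[OF m, of "mat_sub X m y q"]
      by (simp add: X.mat_sub_dsum_dsum qnorm_dsum[OF n m])
  qed
  then show ?thesis
    using car x y qmat_mpos_quotI[of "n + m"] n by (simp add: qmat_dsum)
qed

lemma mpos_quot_proper:
  assumes n: "n \<ge> 1" and S: "S \<in> mpos Q n" and S': "mat_scale Q n (-1) S \<in> mpos Q n"
  shows "S = mat_zero Q"
proof -
  obtain x where x: "quot_pos n x" "S = qmat x"
    using mpos_quotE[OF n S] .
  have car: "x \<in> X.car n"
    using x by (simp add: quot_pos_def)
  have "quot_pos n (mat_scale X n (-1) x)"
    using S' x car qmat_mpos_quot_iff[OF n] by (simp add: qmat_scale)
  then have "mat_scale Y n (-1) (Phi n x) \<in> mpos Y n"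
    using quot_pos_Phi[OF n] Phi_scale[OF car] by metis
  then have "Phi n x = mat_zero Y"
    using Y.pos_proper[OF n quot_pos_Phi[OF n x(1)]] by simp
  then show ?thesis
    using qmat_eq_iff[OF car X.mat_zero_in] x(2) by (simp add: qmat_zero Phi_zero)
qed

lemma matrix_ordered_os_quot: "matrix_ordered_os Q"
  unfolding matrix_ordered_os_def
  by (simp add: involutive_os_quot mpos_quot_self_adjoint mpos_quot_closed mpos_quot_add
      mpos_quot_scale mpos_quot_conj mpos_quot_dsum mpos_quot_proper)

end

theorem proposition3p4:
  fixes X :: "'a mos" and Y :: "'b mos" and \<phi> :: "'a \<Rightarrow> 'b" and J :: "'a set"
  assumes "matrix_ordered_os X"
    and "matrix_ordered_os Y"
    and "ccp_map X Y \<phi>"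
    and "J = kernel_of X Y \<phi>"
  shows "matrix_ordered_os (quot X J)"
proof -
  interpret ccp_kernel_quotient X Y \<phi> J
    using assms by unfold_locales
  show ?thesis
    by (rule matrix_ordered_os_quot)
qed

end
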